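(* Let $p$ be a prime greater than $3$ and let $t$ be an indeterminate. Then $$P_{[p/3]}(t)\equiv\sum_{k=0}^{[p/3]}\frac{(3k)!}{k!^3}\Big(\frac{1-t}{54}\Big)^k\pmod p.$$
   Context: $P_n(x)$ denotes the $n$-th Legendre polynomial, defined by $\frac1{\sqrt{1-2xt+t^2}}=\sum_{n\ge0}P_n(x)t^n$; equivalently $P_n(x)=\frac1{2^n}\sum_{k=0}^{[n/2]}\frac{(-1)^k(2n-2k)!}{k!(n-k)!(n-2k)!}x^{n-2k}$. $[x]$ is the greatest integer not exceeding $x$. A congruence between polynomials with rational coefficients having denominators prime to $p$ means coefficientwise congruence modulo $p$. *)

theory Defs
  imports "HOL-Computational_Algebra.Polynomial" "HOL-Computational_Algebra.Primes"
begin

definition legendreP :: "nat \<Rightarrow> rat poly" where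
  "legendreP n = (\<Sum>k = 0..n div 2.
      monom ((-1) ^ k * fact (2*n - 2*k) /
             (2 ^ n * fact k * fact (n - k) * fact (n - 2*k))) (n - 2*k))"

definition p_integral :: "nat \<Rightarrow> rat \<Rightarrow> bool" where
  "p_integral p q \<longleftrightarrow> (\<exists>a b. q = of_int a / of_int b \<and> \<not> int p dvd b)"

definition rat_cong :: "nat \<Rightarrow> rat \<Rightarrow> rat \<Rightarrow> bool" where
  "rat_cong p x y \<longleftrightarrow> p_integral p x \<and> p_integral p y \<and>
     (\<exists>a b. x - y = of_int a / of_int b \<and> \<not> int p dvd b \<and> int p dvd a)"

definition poly_cong :: "nat \<Rightarrow> rat poly \<Rightarrow> rat poly \<Rightarrow> bool" where
  "poly_cong p f g \<longleftrightarrow> (\<forall>i. rat_cong p (coeff f i) (coeff g i))"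

end

theory Submission
  imports Defs "HOL-Number_Theory.Cong"
begin

text \<open>Expanding Rodrigues' formula P_n = D^n (x^2 - 1)^n / (2^n n!) around x = 1 gives
  P_n(x) = sum_k C(n,k) C(n+k,k) ((x-1)/2)^k = sum_k (-27)^k C(n,k) C(n+k,k) ((1-x)/54)^k.
  For n = [p/3] the prime p divides (3n+1)(3n+2), and
  -27 (n-i)(n+i+1) - 3 (3i+1)(3i+2) = -3 (3n+1)(3n+2),
  so the product over i < k gives (-27)^k k!^2 C(n,k) C(n+k,k) = (3k)!/k! (mod p);
  dividing by k!^2 is allowed because k <= n < p.\<close>

lemma smult_sum_right: "smult c (\<Sum>x\<in>A. f x) = (\<Sum>x\<in>A. smult c (f x))"
  by (induction A rule: infinite_finite_induct) (simp_all add: smult_add_right)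

lemma higher_pderiv_linear_power:
  "(pderiv ^^ j) ([:a, 1:] ^ m :: 'a::field_char_0 poly) =
     (if j \<le> m then smult (fact m / fact (m - j)) ([:a, 1:] ^ (m - j)) else 0)"
proof (induction j)
  case (Suc j)
  show ?case
  proof (cases "Suc j \<le> m")
    case True
    define d where "d = m - Suc j"
    have m_j: "m - j = Suc d" using True unfolding d_def by simp
    have "pderiv ([:a, 1:] ^ (m - j) :: 'a poly) = smult (of_nat (Suc d)) ([:a, 1:] ^ d)"
      unfolding m_j pderiv_power_Suc by (simp add: pderiv_pCons)
    moreover have "fact m / fact (Suc d) * of_nat (Suc d) = (fact m / fact d :: 'a)"
      by (simp add: field_simps del: of_nat_Suc)
    ultimately show ?thesis using Suc True by (simp add: m_j d_def pderiv_smult del: of_nat_Suc)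
  qed (use Suc in \<open>auto simp: pderiv_power pderiv_pCons\<close>)
qed simp

lemma legendreP_Rodrigues:
  "legendreP n = smult (1 / (2 ^ n * fact n)) ((pderiv ^^ n) ([:-1, 0, 1:] ^ n))"
proof -
  let ?c = "\<lambda>k. (-1) ^ k * fact (2 * n - 2 * k) /
    (2 ^ n * fact k * fact (n - k) * fact (n - 2 * k)) :: rat"
  have split: "[:-1, 0, 1:] = [:-1:] + [:0, 1 :: rat:] ^ 2"
    by (simp add: power2_eq_square)
  have expand: "[:-1, 0, 1:] ^ n =
      (\<Sum>k\<le>n. smult (of_nat (n choose k) * (-1) ^ k) ([:0, 1:] ^ (2 * (n - k)) :: rat poly))"
    unfolding split binomial_ring
    by (rule sum.cong)
       (simp_all add: power_mult[symmetric] of_nat_poly poly_const_pow mult.commute)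
  have "smult (1 / (2 ^ n * fact n)) ((pderiv ^^ n) ([:-1, 0, 1:] ^ n)) =
      (\<Sum>k\<le>n. if n \<le> 2 * (n - k) then smult (?c k) ([:0, 1:] ^ (n - 2 * k)) else 0)"
    unfolding expand higher_pderiv_sum smult_sum_right
  proof (intro sum.cong refl)
    fix k assume "k \<in> {..n}"
    then have "2 * (n - k) = 2 * n - 2 * k" "2 * (n - k) - n = n - 2 * k" by auto
    then show "smult (1 / (2 ^ n * fact n))
        ((pderiv ^^ n) (smult (of_nat (n choose k) * (-1) ^ k) ([:0, 1:] ^ (2 * (n - k))))) =
      (if n \<le> 2 * (n - k) then smult (?c k) ([:0, 1:] ^ (n - 2 * k)) else 0)"
      using \<open>k \<in> {..n}\<close>
      by (simp add: higher_pderiv_smult higher_pderiv_linear_power[where a = 0] binomial_fact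
          mult.assoc)
  qed
  also have "\<dots> = (\<Sum>k = 0..n div 2. smult (?c k) ([:0, 1:] ^ (n - 2 * k)))"
  proof -
    have "{k \<in> {..n}. n \<le> 2 * (n - k)} = {0..n div 2}" by auto
    then show ?thesis by (simp add: sum.inter_filter[symmetric])
  qed
  finally show ?thesis
    unfolding legendreP_def monom_altdef by simp
qed

lemma legendreP_eq_shifted_sum:
  "legendreP n =
    (\<Sum>k = 0..n. smult (of_nat ((n choose k) * ((n + k) choose k))) ([:-1/2, 1/2:] ^ k))"
proof -
  have split: "[:-1, 0, 1:] = [:-1, 1:] * ([:-1, 1:] + [:2 :: rat:])"
    by simp
  have expand: "[:-1, 0, 1:] ^ n =
      (\<Sum>k\<le>n. smult (of_nat (n choose k) * 2 ^ (n - k)) ([:-1, 1 :: rat:] ^ (n + k)))"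
    unfolding split power_mult_distrib binomial_ring sum_distrib_left
    by (rule sum.cong) (simp_all add: of_nat_poly poly_const_pow power_add mult_ac)
  show ?thesis
    unfolding legendreP_Rodrigues expand higher_pderiv_sum smult_sum_right atLeast0AtMost
  proof (intro sum.cong refl)
    fix k assume "k \<in> {..n}"
    then have pow2: "(2 :: rat) ^ (n - k) = 2 ^ n / 2 ^ k" by (simp add: power_diff)
    have binom: "(of_nat ((n + k) choose k) :: rat) = fact (n + k) / (fact k * fact n)"
      using binomial_fact[of k "n + k"] by simp
    have half: "[:-1/2, 1/2:] = smult (1/2) [:-1, 1 :: rat:]" by simp
    show "smult (1 / (2 ^ n * fact n))
        ((pderiv ^^ n) (smult (of_nat (n choose k) * 2 ^ (n - k)) ([:-1, 1:] ^ (n + k)))) =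
      smult (of_nat ((n choose k) * ((n + k) choose k))) ([:-1/2, 1/2 :: rat:] ^ k)"
      unfolding half smult_power smult_smult higher_pderiv_smult higher_pderiv_linear_power pow2
        of_nat_mult binom
      by (simp add: field_simps)
  qed
qed

definition p_multiple :: "nat \<Rightarrow> rat \<Rightarrow> bool" where
  "p_multiple p q \<longleftrightarrow> (\<exists>a b. q = of_int a / of_int b \<and> \<not> int p dvd b \<and> int p dvd a)"

lemma rat_cong_iff:
  "rat_cong p x y \<longleftrightarrow> p_integral p x \<and> p_integral p y \<and> p_multiple p (x - y)"
  unfolding rat_cong_def p_multiple_def ..

lemma p_integral_of_int: "prime p \<Longrightarrow> p_integral p (of_int a)"
  unfolding p_integral_def by (rule exI[of _ a], rule exI[of _ 1]) (auto simp: prime_gt_1_nat)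

lemma p_integral_add:
  assumes "prime p" "p_integral p x" "p_integral p y"
  shows "p_integral p (x + y)"
proof -
  obtain a b c d where x: "x = of_int a / of_int b" "\<not> int p dvd b"
    and y: "y = of_int c / of_int d" "\<not> int p dvd d"
    using assms unfolding p_integral_def by blast
  then have "b \<noteq> 0" "d \<noteq> 0" by auto
  then have "x + y = of_int (a * d + c * b) / of_int (b * d)" using x y by (simp add: field_simps)
  moreover have "\<not> int p dvd b * d" using assms(1) x y by (simp add: prime_dvd_mult_iff)
  ultimately show ?thesis unfolding p_integral_def by blast
qed

lemma p_integral_mult:
  assumes "prime p" "p_integral p x" "p_integral p y"
  shows "p_integral p (x * y)"
proof -
  obtain a b c d where x: "x = of_int a / of_int b" "\<not> int p dvd b"
    and y: "y = of_int c / of_int d" "\<not> int p dvd d"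
    using assms unfolding p_integral_def by blast
  then have "x * y = of_int (a * c) / of_int (b * d)" by simp
  moreover have "\<not> int p dvd b * d" using assms(1) x y by (simp add: prime_dvd_mult_iff)
  ultimately show ?thesis unfolding p_integral_def by blast
qed

lemma p_integral_diff:
  assumes "prime p" "p_integral p x" "p_integral p y"
  shows "p_integral p (x - y)"
proof -
  have "p_integral p (of_int (-1) * y)"
    by (rule p_integral_mult[OF assms(1) p_integral_of_int[OF assms(1)] assms(3)])
  then show ?thesis using p_integral_add[OF assms(1,2), of "-y"] by simp
qed

lemma p_integral_sum:
  assumes "prime p" "\<And>x. x \<in> A \<Longrightarrow> p_integral p (f x)"
  shows "p_integral p (\<Sum>x\<in>A. f x)"
  using assms(2)
  by (induction A rule: infinite_finite_induct)
     (auto intro: p_integral_add[OF assms(1)] p_integral_of_int[OF assms(1), where a = 0, simplified])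

lemma p_multiple_iff_p_integral_div:
  assumes "prime p"
  shows "p_multiple p x \<longleftrightarrow> p_integral p (x / of_nat p)"
proof
  assume "p_multiple p x"
  then obtain a b where x: "x = of_int (int p * a) / of_int b" "\<not> int p dvd b"
    unfolding p_multiple_def by (auto elim!: dvdE)
  then have "x / of_nat p = of_int a / of_int b" using prime_gt_0_nat[OF assms] by simp
  then show "p_integral p (x / of_nat p)" unfolding p_integral_def using x(2) by blast
next
  assume "p_integral p (x / of_nat p)"
  then obtain a b where "x / of_nat p = of_int a / of_int b" "\<not> int p dvd b"
    unfolding p_integral_def by blast
  moreover from this(1) have "x = of_int (int p * a) / of_int b"
    using prime_gt_0_nat[OF assms] by (simp add: field_simps)
  ultimately show "p_multiple p x" unfolding p_multiple_def by fastforce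
qed

lemma p_multiple_imp_p_integral:
  assumes "prime p" "p_multiple p x"
  shows "p_integral p x"
proof -
  have "p_integral p (x / of_nat p)"
    using assms by (simp add: p_multiple_iff_p_integral_div)
  then have "p_integral p (of_int (int p) * (x / of_nat p))"
    by (rule p_integral_mult[OF assms(1) p_integral_of_int[OF assms(1)]])
  then show ?thesis using prime_gt_0_nat[OF assms(1)] by simp
qed

lemma p_multiple_mult:
  "prime p \<Longrightarrow> p_multiple p x \<Longrightarrow> p_integral p y \<Longrightarrow> p_multiple p (x * y)"
  using p_integral_mult[of p "x / of_nat p" y] by (simp add: p_multiple_iff_p_integral_div)

lemma p_multiple_sum:
  assumes "prime p" "\<And>x. x \<in> A \<Longrightarrow> p_multiple p (f x)"
  shows "p_multiple p (\<Sum>x\<in>A. f x)"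
  using assms
  by (simp add: p_multiple_iff_p_integral_div sum_divide_distrib p_integral_sum)

lemma p_integral_coeff_power:
  assumes "prime p" "\<And>i. p_integral p (coeff f i)"
  shows "p_integral p (coeff (f ^ k) i)"
proof (induction k arbitrary: i)
  case 0
  show ?case using p_integral_of_int[OF assms(1), of "of_bool (i = 0)"] by simp
next
  case (Suc k)
  show ?case
    unfolding power_Suc coeff_mult using assms Suc by (simp add: p_integral_sum p_integral_mult)
qed

lemma poly_cong_sum_smult:
  assumes "prime p"
    and "\<And>k i. k \<in> A \<Longrightarrow> p_integral p (coeff (f k) i)"
    and "\<And>k. k \<in> A \<Longrightarrow> p_integral p (a k)"
    and "\<And>k. k \<in> A \<Longrightarrow> p_multiple p (a k - b k)"
  shows "poly_cong p (\<Sum>k\<in>A. smult (a k) (f k)) (\<Sum>k\<in>A. smult (b k) (f k))"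
  unfolding poly_cong_def rat_cong_iff
proof (intro allI conjI)
  fix i
  have b: "p_integral p (b k)" if "k \<in> A" for k
    using p_integral_diff[OF assms(1) assms(3)[OF that]
        p_multiple_imp_p_integral[OF assms(1) assms(4)[OF that]]]
    by simp
  show "p_integral p (coeff (\<Sum>k\<in>A. smult (a k) (f k)) i)"
    unfolding coeff_sum coeff_smult using assms by (simp add: p_integral_sum p_integral_mult)
  show "p_integral p (coeff (\<Sum>k\<in>A. smult (b k) (f k)) i)"
    unfolding coeff_sum coeff_smult using assms b by (simp add: p_integral_sum p_integral_mult)
  have "coeff (\<Sum>k\<in>A. smult (a k) (f k)) i - coeff (\<Sum>k\<in>A. smult (b k) (f k)) i =
      (\<Sum>k\<in>A. (a k - b k) * coeff (f k) i)"
    unfolding coeff_sum coeff_smult sum_subtractf[symmetric] left_diff_distrib ..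
  then show "p_multiple p
      (coeff (\<Sum>k\<in>A. smult (a k) (f k)) i - coeff (\<Sum>k\<in>A. smult (b k) (f k)) i)"
    using assms by (simp add: p_multiple_sum p_multiple_mult)
qed

lemma fact_times_binomial_eq_prod:
  "k \<le> n \<Longrightarrow> fact k * int (n choose k) = (\<Prod>i<k. int n - int i)"
proof (induction k)
  case (Suc k)
  have "Suc k * (n choose Suc k) = (n - k) * (n choose k)"
    by (metis binomial_absorption binomial_absorb_comp)
  then have "int (Suc k) * int (n choose Suc k) = (int n - int k) * int (n choose k)"
    using Suc.prems by (metis of_nat_diff of_nat_mult Suc_leD)
  then have "fact (Suc k) * int (n choose Suc k) = fact k * int (n choose k) * (int n - int k)"
    unfolding fact_Suc of_nat_mult by (metis mult.assoc mult.commute)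
  then show ?case using Suc by simp
qed simp

lemma fact_times_binomial_eq_rising:
  "fact k * int ((n + k) choose k) = (\<Prod>i<k. int n + int i + 1)"
proof (induction k)
  case (Suc k)
  have "int (Suc k) * int (Suc (n + k) choose Suc k) =
      int (Suc (n + k)) * int ((n + k) choose k)"
    by (metis Suc_times_binomial of_nat_mult)
  then have "fact (Suc k) * int ((n + Suc k) choose Suc k) =
      fact k * int ((n + k) choose k) * (int n + int k + 1)"
    unfolding fact_Suc of_nat_mult add_Suc_right
    by (metis mult.assoc mult.commute of_nat_Suc of_nat_add add.commute)
  then show ?case using Suc by simp
qed simp

lemma fact_triple_eq_prod:
  "fact (3 * k) = fact k * (\<Prod>i<k. 3 * (3 * int i + 1) * (3 * int i + 2))"
proof (induction k)
  case (Suc k)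
  have "3 * Suc k = Suc (Suc (Suc (3 * k)))" by simp
  then have "fact (3 * Suc k) =
      fact (3 * k) * ((3 * int k + 1) * (3 * int k + 2) * (3 * int k + 3))"
    by (simp only: fact_Suc) (simp add: algebra_simps)
  then show ?case using Suc by (simp add: algebra_simps)
qed simp

lemma binomial_pair_cong_fact_triple:
  assumes "int p dvd (3 * int n + 1) * (3 * int n + 2)" "k \<le> n"
  shows "[(-27) ^ k * fact k ^ 3 * int ((n choose k) * ((n + k) choose k)) = fact (3 * k)]
    (mod int p)"
proof -
  have factor_cong: "[-27 * ((int n - int i) * (int n + int i + 1)) =
      3 * (3 * int i + 1) * (3 * int i + 2)] (mod int p)" for i
  proof -
    have "-27 * ((int n - int i) * (int n + int i + 1)) - 3 * (3 * int i + 1) * (3 * int i + 2) =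
        -3 * ((3 * int n + 1) * (3 * int n + 2))"
      by (simp add: algebra_simps)
    then show ?thesis using assms(1) by (simp add: cong_iff_dvd_diff)
  qed
  have "(\<Prod>i<k. -27 * ((int n - int i) * (int n + int i + 1))) =
      (-27) ^ k * ((fact k * int (n choose k)) * (fact k * int ((n + k) choose k)))"
    unfolding prod.distrib fact_times_binomial_eq_prod[OF assms(2)] fact_times_binomial_eq_rising
    by simp
  then have "(-27) ^ k * fact k ^ 2 * int ((n choose k) * ((n + k) choose k)) =
      (\<Prod>i<k. -27 * ((int n - int i) * (int n + int i + 1)))"
    by (simp add: power2_eq_square mult_ac)
  also have "[\<dots> = (\<Prod>i<k. 3 * (3 * int i + 1) * (3 * int i + 2))] (mod int p)"
    by (rule cong_prod) (rule factor_cong)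
  finally show ?thesis
    unfolding fact_triple_eq_prod
    by (simp add: cong_scalar_left power3_eq_cube power2_eq_square mult_ac)
qed

lemma binomial_pair_minus_fact_triple_p_multiple:
  assumes "prime p" "int p dvd (3 * int n + 1) * (3 * int n + 2)" "k \<le> n" "k < p"
  shows "p_multiple p
    ((-27) ^ k * of_nat ((n choose k) * ((n + k) choose k)) - fact (3 * k) / fact k ^ 3)"
proof -
  define a where
    "a = (-27) ^ k * fact k ^ 3 * int ((n choose k) * ((n + k) choose k)) - fact (3 * k)"
  have "int p dvd a"
    using binomial_pair_cong_fact_triple[OF assms(2,3)] unfolding a_def
    by (simp add: cong_iff_dvd_diff)
  moreover have "\<not> int p dvd fact k ^ 3"
  proof
    assume "int p dvd fact k ^ 3"
    then have "int p dvd int (fact k ^ 3)" by simp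
    then have "p dvd fact k ^ 3" by (simp only: int_dvd_int_iff)
    then have "p dvd fact k"
      using assms(1) prime_dvd_power by blast
    then show False using assms(1,4) by (simp add: prime_dvd_fact_iff)
  qed
  moreover have "(-27) ^ k * of_nat ((n choose k) * ((n + k) choose k)) - fact (3 * k) / fact k ^ 3
      = (of_int a / of_int (fact k ^ 3) :: rat)"
    unfolding a_def by (simp add: field_simps)
  ultimately show ?thesis unfolding p_multiple_def by blast
qed

lemma prime_dvd_three_div_products:
  assumes "prime p" "p > 3"
  shows "int p dvd (3 * int (p div 3) + 1) * (3 * int (p div 3) + 2)"
proof -
  have "\<not> 3 dvd p"
    using assms by (auto simp: prime_nat_iff)
  then have "int p = 3 * int (p div 3) + 1 \<or> int p = 3 * int (p div 3) + 2" by presburger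
  then show ?thesis by auto
qed

lemma p_integral_coeff_one_minus_X_div_54:
  assumes "prime p" "p > 3"
  shows "p_integral p (coeff [:1/54, -1/54:] i)"
proof -
  have "\<not> int p dvd 54"
  proof
    assume "int p dvd 54"
    then have "p dvd 54" by (metis int_dvd_int_iff of_nat_numeral)
    then have "p dvd 2 * 3 ^ 3" by simp
    then have "p dvd 2 \<or> p dvd 3" using assms(1) by (metis prime_dvd_mult_iff prime_dvd_power)
    then show False using assms(2) by (auto dest: dvd_imp_le)
  qed
  then have "p_integral p (of_int c / of_int 54)" for c
    unfolding p_integral_def by blast
  from this[of 1] this[of "-1"] this[of 0] show ?thesis
    by (cases i; cases "i - 1") (auto simp: coeff_pCons)
qed

theorem lemma2p3:
  fixes p :: nat
  assumes "prime p" and "p > 3"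
  shows "poly_cong p (legendreP (p div 3))
           (\<Sum>k = 0..p div 3. smult (fact (3*k) / (fact k) ^ 3) ([:1/54, -1/54:] ^ k))"
proof -
  define n where "n = p div 3"
  have "n < p" using assms(2) unfolding n_def by simp
  have p_dvd: "int p dvd (3 * int n + 1) * (3 * int n + 2)"
    unfolding n_def by (rule prime_dvd_three_div_products[OF assms])
  have half: "[:-1/2, 1/2:] = smult (-27) [:1/54, -1/54 :: rat:]" by simp
  have "legendreP n = (\<Sum>k = 0..n.
      smult ((-27) ^ k * of_nat ((n choose k) * ((n + k) choose k))) ([:1/54, -1/54:] ^ k))"
    unfolding legendreP_eq_shifted_sum half smult_power smult_smult by (simp add: mult.commute)
  also have "poly_cong p \<dots>
      (\<Sum>k = 0..n. smult (fact (3 * k) / fact k ^ 3) ([:1/54, -1/54:] ^ k))"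
  proof (rule poly_cong_sum_smult[OF assms(1)])
    show "p_integral p (coeff ([:1/54, -1/54:] ^ k) i)" for k i
      by (rule p_integral_coeff_power[OF assms(1) p_integral_coeff_one_minus_X_div_54[OF assms]])
    show "p_integral p ((-27) ^ k * of_nat ((n choose k) * ((n + k) choose k)))" for k
      using p_integral_of_int[OF assms(1), of "(-27) ^ k * int ((n choose k) * ((n + k) choose k))"]
      by simp
    show "p_multiple p
        ((-27) ^ k * of_nat ((n choose k) * ((n + k) choose k)) - fact (3 * k) / fact k ^ 3)"
      if "k \<in> {0..n}" for k
      using that \<open>n < p\<close>
      by (intro binomial_pair_minus_fact_triple_p_multiple[OF assms(1) p_dvd]) auto
  qed
  finally show ?thesis unfolding n_def .
qed

end
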